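(* Let $G=G'\times H$ be a product of commutative groups with $H$ torsion-free, let $U\subset G'$ be finite (identified with $U\times\{0\}\subset G$), and let $\vartheta$ be any of the functionals $\alpha,\alpha',\alpha'',\beta',\beta''$. Then $\vartheta(U,G)=\vartheta(U,G')$.
   Context: $\vartheta(U,K)$ denotes the functional computed with $A,B$ ranging over nonempty finite subsets of the ambient group $K$: $\alpha(U,K)=\inf_{A\supset U,B\supset U}\frac{|A+B|}{\sqrt{|A||B|}}$; $\alpha'(U,K)=\inf_{A\supset U,B\supset U,|A|=|B|}\frac{|A+B|}{|A|}$; $\alpha''(U,K)=\inf_{A\supset U}\frac{|A+A|}{|A|}$; $\beta'(U,K)=\inf_{A,B,|A|=|B|}\frac{|A+B+U|}{\sqrt{|A||B|}}$; $\beta''(U,K)=\inf_A\frac{|A+A+U|}{|A|}$. *)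

theory Defs
  imports Complex_Main "HOL-Library.Product_Plus"
begin

definition sumset :: "'g::ab_group_add set \<Rightarrow> 'g set \<Rightarrow> 'g set" where
  "sumset A B = {a + b | a b. a \<in> A \<and> b \<in> B}"

definition torsion_free :: "'g::ab_group_add itself \<Rightarrow> bool" where
  "torsion_free _ \<longleftrightarrow> (\<forall>(x::'g) (n::nat). 0 < n \<and> (((+) x) ^^ n) 0 = 0 \<longrightarrow> x = 0)"

text \<open>The functionals; the ambient group K is the type 'g, A and B range over
  nonempty finite subsets of K.\<close>
definition alpha :: "'g::ab_group_add set \<Rightarrow> real" where
  "alpha U = Inf {real (card (sumset A B)) / sqrt (real (card A) * real (card B)) | A B.
     finite A \<and> A \<noteq> {} \<and> finite B \<and> B \<noteq> {} \<and> U \<subseteq> A \<and> U \<subseteq> B}"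

definition alpha' :: "'g::ab_group_add set \<Rightarrow> real" where
  "alpha' U = Inf {real (card (sumset A B)) / real (card A) | A B.
     finite A \<and> A \<noteq> {} \<and> finite B \<and> B \<noteq> {} \<and> U \<subseteq> A \<and> U \<subseteq> B \<and> card A = card B}"

definition alpha'' :: "'g::ab_group_add set \<Rightarrow> real" where
  "alpha'' U = Inf {real (card (sumset A A)) / real (card A) | A.
     finite A \<and> A \<noteq> {} \<and> U \<subseteq> A}"

definition beta' :: "'g::ab_group_add set \<Rightarrow> real" where
  "beta' U = Inf {real (card (sumset (sumset A B) U)) / sqrt (real (card A) * real (card B)) | A B.
     finite A \<and> A \<noteq> {} \<and> finite B \<and> B \<noteq> {} \<and> card A = card B}"

definition beta'' :: "'g::ab_group_add set \<Rightarrow> real" where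
  "beta'' U = Inf {real (card (sumset (sumset A A) U)) / real (card A) | A.
     finite A \<and> A \<noteq> {}}"

end

theory Submission
  imports Defs "HOL-Library.FuncSet"
begin

(*
  If G' contains an element g of infinite order, every finite configuration in G' \<times> H can be
  pushed into G' by a map that is additive on G' \<times> \<langle>S\<rangle>, where S is the finite set of
  H-coordinates involved, injective on the configuration, and the identity on G' \<times> {0}.
  Indeed \<langle>S\<rangle> is finitely generated and torsion-free, so some additive \<phi> : \<langle>S\<rangle> \<rightarrow> \<int> vanishes
  on none of finitely many prescribed nonzero elements, and (a, h) \<mapsto> a + N \<phi>(h) g does the job
  for N large.  Such a map preserves every cardinality occurring in the definitions, so
  \<vartheta>(U, G') \<le> \<vartheta>(U, G); the embedding of G' into G gives the reverse inequality.
  If every element of G' has finite order, \<langle>U\<rangle> is a finite subgroup F, and A = B = F shows that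
  \<vartheta>(U, G') attains the trivial lower bound 1 (or 0 for \<beta>', \<beta>'' when U is empty), which
  bounds \<vartheta>(U, G) from below as well.
*)

section \<open>Integer multiples\<close>

primrec nat_scale :: "nat \<Rightarrow> 'a::ab_group_add \<Rightarrow> 'a" where
  "nat_scale 0 x = 0"
| "nat_scale (Suc n) x = x + nat_scale n x"

definition int_scale :: "int \<Rightarrow> 'a::ab_group_add \<Rightarrow> 'a" where
  "int_scale k x = nat_scale (nat k) x - nat_scale (nat (- k)) x"

lemma nat_scale_add_left: "nat_scale (m + n) x = nat_scale m x + nat_scale n x"
  by (induction m) (simp_all add: add.assoc)

lemma nat_scale_add_right: "nat_scale n (x + y) = nat_scale n x + nat_scale n y"
  by (induction n) (simp_all add: algebra_simps)

lemma nat_scale_zero_right [simp]: "nat_scale n 0 = 0"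
  by (induction n) simp_all

lemma nat_scale_eq_funpow: "nat_scale n x = ((+) x ^^ n) 0"
  by (induction n) simp_all

lemma int_scale_of_nat [simp]: "int_scale (int n) x = nat_scale n x"
  by (simp add: int_scale_def)

lemma int_scale_diff_of_nat: "int_scale (int m - int n) x = nat_scale m x - nat_scale n x"
proof (cases "n \<le> m")
  case True
  then have "nat_scale m x = nat_scale (m - n) x + nat_scale n x"
    by (simp flip: nat_scale_add_left)
  with True show ?thesis
    by (simp add: int_scale_def nat_diff_distrib')
next
  case False
  then have "nat_scale n x = nat_scale (n - m) x + nat_scale m x"
    by (simp flip: nat_scale_add_left)
  with False show ?thesis
    by (simp add: int_scale_def nat_diff_distrib')
qed

lemma int_scale_add_left: "int_scale (a + b) x = int_scale a x + int_scale b x"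
proof -
  have "a + b = int (nat a + nat b) - int (nat (- a) + nat (- b))"
    by simp
  then have "int_scale (a + b) x = nat_scale (nat a + nat b) x - nat_scale (nat (- a) + nat (- b)) x"
    by (metis int_scale_diff_of_nat)
  then show ?thesis
    by (simp add: int_scale_def nat_scale_add_left)
qed

lemma int_scale_zero_left [simp]: "int_scale 0 x = 0"
  by (simp add: int_scale_def)

lemma int_scale_one [simp]: "int_scale 1 x = x"
  by (simp add: int_scale_def)

lemma int_scale_zero_right [simp]: "int_scale k 0 = 0"
  by (simp add: int_scale_def)

lemma int_scale_minus_left: "int_scale (- k) x = - int_scale k x"
  by (simp add: int_scale_def)

lemma int_scale_diff_left: "int_scale (a - b) x = int_scale a x - int_scale b x"
  using int_scale_add_left [of a "- b" x] by (simp add: int_scale_minus_left)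

lemma int_scale_add_right: "int_scale k (x + y) = int_scale k x + int_scale k y"
  by (simp add: int_scale_def nat_scale_add_right algebra_simps)

lemma int_scale_int_scale: "int_scale a (int_scale b x) = int_scale (a * b) x"
  by (induction a rule: int_induct [of _ 0])
    (simp_all add: int_scale_add_left int_scale_diff_left algebra_simps)

lemma int_scale_sum_right: "int_scale k (\<Sum>t\<in>S. f t) = (\<Sum>t\<in>S. int_scale k (f t))"
  by (induction S rule: infinite_finite_induct) (simp_all add: int_scale_add_right)

lemma int_scale_abs_eq_0: "int_scale k x = 0 \<Longrightarrow> int_scale \<bar>k\<bar> x = 0"
  by (cases "0 \<le> k") (simp_all add: int_scale_minus_left)

lemma torsion_free_int_scale_eq_0:
  fixes x :: "'b::ab_group_add"
  assumes "torsion_free TYPE('b)" "k \<noteq> 0" "int_scale k x = 0"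
  shows "x = 0"
proof -
  have "nat_scale (nat \<bar>k\<bar>) x = 0"
    using int_scale_abs_eq_0 [OF assms(3)] by (metis abs_ge_zero int_nat_eq int_scale_of_nat)
  moreover have "0 < nat \<bar>k\<bar>"
    using assms(2) by simp
  ultimately show ?thesis
    using assms(1) unfolding torsion_free_def nat_scale_eq_funpow by blast
qed

lemma inj_int_scale:
  assumes "\<And>k. int_scale k g = 0 \<Longrightarrow> k = 0"
  shows "inj (\<lambda>k. int_scale k g)"
proof (rule injI)
  fix a b
  assume "int_scale a g = int_scale b g"
  then have "int_scale (a - b) g = 0"
    by (simp add: int_scale_diff_left)
  then have "a - b = 0"
    by (rule assms)
  then show "a = b"
    by simp
qed

section \<open>Subgroups generated by finite sets\<close>

text \<open>Only meaningful for finite S: an infinite sum is 0.\<close>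

definition int_span :: "'a::ab_group_add set \<Rightarrow> 'a set" where
  "int_span S = {y. \<exists>c. y = (\<Sum>t\<in>S. int_scale (c t) t)}"

lemma int_span_empty [simp]: "int_span {} = {0}"
  by (simp add: int_span_def)

lemma zero_mem_int_span [simp]: "0 \<in> int_span S"
  unfolding int_span_def by (auto intro: exI [of _ "\<lambda>_. 0"])

lemma int_span_add:
  assumes "x \<in> int_span S" "y \<in> int_span S"
  shows "x + y \<in> int_span S"
proof -
  obtain c d where "x = (\<Sum>t\<in>S. int_scale (c t) t)" "y = (\<Sum>t\<in>S. int_scale (d t) t)"
    using assms unfolding int_span_def by blast
  then have "x + y = (\<Sum>t\<in>S. int_scale (c t + d t) t)"
    by (simp add: int_scale_add_left sum.distrib)
  then show ?thesis
    unfolding int_span_def by auto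
qed

lemma int_span_int_scale:
  assumes "x \<in> int_span S"
  shows "int_scale k x \<in> int_span S"
proof -
  obtain c where "x = (\<Sum>t\<in>S. int_scale (c t) t)"
    using assms unfolding int_span_def by blast
  then have "int_scale k x = (\<Sum>t\<in>S. int_scale (k * c t) t)"
    by (simp add: int_scale_sum_right int_scale_int_scale)
  then show ?thesis
    unfolding int_span_def by auto
qed

lemma int_span_diff: "x \<in> int_span S \<Longrightarrow> y \<in> int_span S \<Longrightarrow> x - y \<in> int_span S"
  using int_span_add [of x S "int_scale (- 1) y"] int_span_int_scale [of y S "- 1"]
  by (simp add: int_scale_minus_left)

lemma int_span_superset:
  assumes "finite S"
  shows "S \<subseteq> int_span S"
proof
  fix s
  assume "s \<in> S"
  then have "s = (\<Sum>t\<in>S. int_scale (if t = s then 1 else 0) t)"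
    using assms by (simp add: if_distrib [of "\<lambda>k. int_scale k _"] cong: if_cong)
  then show "s \<in> int_span S"
    unfolding int_span_def by auto
qed

lemma sumset_int_span: "sumset (int_span S) (int_span S) = int_span S"
  unfolding sumset_def by (force intro: int_span_add)

lemma int_span_insert:
  assumes "finite S"
  shows "y \<in> int_span (insert s S) \<longleftrightarrow> (\<exists>x\<in>int_span S. \<exists>k. y = x + int_scale k s)"
proof (cases "s \<in> S")
  case True
  then have "s \<in> int_span S"
    using int_span_superset [OF assms] by blast
  then show ?thesis
    using True
    by (metis add.right_neutral insert_absorb int_scale_zero_left int_span_add int_span_int_scale)
next
  case False
  have split: "(\<Sum>t\<in>insert s S. int_scale (c t) t) = (\<Sum>t\<in>S. int_scale (c t) t) + int_scale (c s) s"
    for c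
    using assms False by (simp add: add.commute)
  show ?thesis
  proof
    assume "y \<in> int_span (insert s S)"
    then obtain c where "y = (\<Sum>t\<in>S. int_scale (c t) t) + int_scale (c s) s"
      unfolding int_span_def split by blast
    then show "\<exists>x\<in>int_span S. \<exists>k. y = x + int_scale k s"
      unfolding int_span_def by auto
  next
    assume "\<exists>x\<in>int_span S. \<exists>k. y = x + int_scale k s"
    then obtain c k where y: "y = (\<Sum>t\<in>S. int_scale (c t) t) + int_scale k s"
      unfolding int_span_def by blast
    have "(\<Sum>t\<in>S. int_scale ((c(s := k)) t) t) = (\<Sum>t\<in>S. int_scale (c t) t)"
      using False by (intro sum.cong) auto
    then have "y = (\<Sum>t\<in>insert s S. int_scale ((c(s := k)) t) t)"
      unfolding split y by simp
    then show "y \<in> int_span (insert s S)"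
      unfolding int_span_def by auto
  qed
qed

lemma finite_int_span_if_torsion:
  assumes "finite S" and torsion: "\<And>u. u \<in> S \<Longrightarrow> \<exists>n>0. int_scale n u = 0"
  shows "finite (int_span S)"
proof -
  obtain n where n: "\<And>u. u \<in> S \<Longrightarrow> n u > 0 \<and> int_scale (n u) u = 0"
    using torsion by metis
  have reduce: "int_scale (c mod n u) u = int_scale c u" if "u \<in> S" for c u
  proof -
    have "int_scale c u = int_scale (c div n u) (int_scale (n u) u) + int_scale (c mod n u) u"
      by (simp add: int_scale_int_scale flip: int_scale_add_left)
    then show ?thesis
      using n [OF that] by simp
  qed
  have "int_span S \<subseteq> (\<lambda>c. \<Sum>t\<in>S. int_scale (c t) t) ` (\<Pi>\<^sub>E u\<in>S. {0..<n u})"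
  proof
    fix y
    assume "y \<in> int_span S"
    then obtain c where y: "y = (\<Sum>t\<in>S. int_scale (c t) t)"
      unfolding int_span_def by blast
    define c' where "c' = restrict (\<lambda>t. c t mod n t) S"
    have "c' \<in> (\<Pi>\<^sub>E u\<in>S. {0..<n u})"
      using n unfolding c'_def by auto
    moreover have "y = (\<Sum>t\<in>S. int_scale (c' t) t)"
      unfolding y c'_def by (intro sum.cong) (simp_all add: reduce)
    ultimately show "y \<in> (\<lambda>c. \<Sum>t\<in>S. int_scale (c t) t) ` (\<Pi>\<^sub>E u\<in>S. {0..<n u})"
      by blast
  qed
  moreover have "finite (\<Pi>\<^sub>E u\<in>S. {0..<n u})"
    using assms(1) by (intro finite_PiE) auto
  ultimately show ?thesis
    using finite_subset by blast
qed

section \<open>Separating homomorphisms into the integers\<close>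

lemma int_mult_add_neq_0:
  fixes a b M :: int
  assumes "\<bar>b\<bar> < M" "a \<noteq> 0"
  shows "M * a + b \<noteq> 0"
proof -
  have "M * 1 \<le> M * \<bar>a\<bar>"
    using assms by (intro mult_left_mono) auto
  then have "\<bar>b\<bar> < \<bar>M * a\<bar>"
    using assms(1) by (simp add: abs_mult)
  then show ?thesis
    by linarith
qed

lemma finite_abs_bound:
  fixes f :: "'a \<Rightarrow> int"
  assumes "finite T"
  obtains M where "\<And>t. t \<in> T \<Longrightarrow> \<bar>f t\<bar> < M"
proof
  fix t
  assume "t \<in> T"
  then have "\<bar>f t\<bar> \<le> (\<Sum>t\<in>T. \<bar>f t\<bar>)"
    using assms by (intro member_le_sum) auto
  then show "\<bar>f t\<bar> < 1 + (\<Sum>t\<in>T. \<bar>f t\<bar>)"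
    by simp
qed

definition additive_on :: "'a::plus set \<Rightarrow> ('a \<Rightarrow> 'b::plus) \<Rightarrow> bool" where
  "additive_on W f \<longleftrightarrow> (\<forall>x\<in>W. \<forall>y\<in>W. f (x + y) = f x + f y)"

lemma additive_on_subset: "additive_on W f \<Longrightarrow> X \<subseteq> W \<Longrightarrow> additive_on X f"
  unfolding additive_on_def by blast

lemma additive_on_zero:
  fixes f :: "'a::monoid_add \<Rightarrow> 'b::group_add"
  assumes "additive_on W f" "0 \<in> W"
  shows "f 0 = 0"
proof -
  have "f (0 + 0) = f 0 + f 0"
    using assms unfolding additive_on_def by blast
  then show ?thesis
    by (metis add.right_neutral add_left_cancel)
qed

definition separated_by_int_homs :: "'a::ab_group_add set \<Rightarrow> bool" where
  "separated_by_int_homs W \<longleftrightarrow>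
     (\<forall>T. finite T \<and> T \<subseteq> W - {0} \<longrightarrow> (\<exists>\<phi>::'a::ab_group_add \<Rightarrow> int. additive_on W \<phi> \<and> (\<forall>t\<in>T. \<phi> t \<noteq> 0)))"

lemma separated_by_int_homsI:
  "(\<And>T. finite T \<Longrightarrow> T \<subseteq> W - {0} \<Longrightarrow> \<exists>\<phi>::'a::ab_group_add \<Rightarrow> int. additive_on W \<phi> \<and> (\<forall>t\<in>T. \<phi> t \<noteq> 0))
     \<Longrightarrow> separated_by_int_homs W"
  unfolding separated_by_int_homs_def by blast

lemma separated_by_int_homsD:
  "separated_by_int_homs W \<Longrightarrow> finite T \<Longrightarrow> T \<subseteq> W - {0}
     \<Longrightarrow> \<exists>\<phi>::'a::ab_group_add \<Rightarrow> int. additive_on W \<phi> \<and> (\<forall>t\<in>T. \<phi> t \<noteq> 0)"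
  unfolding separated_by_int_homs_def by auto

lemma separated_by_int_homs_insert_dependent:
  fixes S :: "'b::ab_group_add set"
  assumes tf: "torsion_free TYPE('b)" and "finite S" and "k \<noteq> 0"
    and dep: "int_scale k s \<in> int_span S" and sep: "separated_by_int_homs (int_span S)"
  shows "separated_by_int_homs (int_span (insert s S))"
proof (rule separated_by_int_homsI)
  fix T
  assume T: "finite T" "T \<subseteq> int_span (insert s S) - {0}"
  have into: "int_scale k y \<in> int_span S" if "y \<in> int_span (insert s S)" for y
  proof -
    obtain x j where x: "x \<in> int_span S" and y: "y = x + int_scale j s"
      using \<open>y \<in> int_span (insert s S)\<close> int_span_insert [OF \<open>finite S\<close>] by blast
    have "int_scale k y = int_scale k x + int_scale j (int_scale k s)"
      unfolding y int_scale_add_right int_scale_int_scale by (simp add: mult.commute)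
    then show ?thesis
      using x dep by (simp add: int_span_add int_span_int_scale)
  qed
  have fin: "finite (int_scale k ` T)"
    using T(1) by simp
  have sub: "int_scale k ` T \<subseteq> int_span S - {0}"
    using T into torsion_free_int_scale_eq_0 [OF tf \<open>k \<noteq> 0\<close>] by auto
  obtain \<phi> :: "'b \<Rightarrow> int" where \<phi>: "additive_on (int_span S) \<phi>" "\<forall>t\<in>int_scale k ` T. \<phi> t \<noteq> 0"
    using separated_by_int_homsD [OF sep fin sub] by blast
  have "additive_on (int_span (insert s S)) (\<lambda>y. \<phi> (int_scale k y))"
    using \<phi>(1) into unfolding additive_on_def by (simp add: int_scale_add_right)
  moreover have "\<forall>t\<in>T. \<phi> (int_scale k t) \<noteq> 0"
    using \<phi>(2) by blast
  ultimately show "\<exists>\<psi>::'b \<Rightarrow> int. additive_on (int_span (insert s S)) \<psi> \<and> (\<forall>t\<in>T. \<psi> t \<noteq> 0)"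
    by blast
qed

text \<open>If no nonzero multiple of s lies in \<^term>\<open>int_span S\<close>, then \<^term>\<open>int_span (insert s S)\<close>
  is the direct sum of \<^term>\<open>int_span S\<close> and \<int>s, and this is the \<int>-coordinate.\<close>

definition int_span_coeff :: "'a::ab_group_add set \<Rightarrow> 'a \<Rightarrow> 'a \<Rightarrow> int" where
  "int_span_coeff S s y = (THE k. y - int_scale k s \<in> int_span S)"

lemma int_span_coeff_eq:
  assumes indep: "\<And>k. int_scale k s \<in> int_span S \<Longrightarrow> k = 0"
    and "y - int_scale k s \<in> int_span S"
  shows "int_span_coeff S s y = k"
  unfolding int_span_coeff_def
proof (rule the_equality)
  fix j
  assume j: "y - int_scale j s \<in> int_span S"
  have "int_scale (k - j) s = (y - int_scale j s) - (y - int_scale k s)"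
    by (simp add: int_scale_diff_left)
  then have "int_scale (k - j) s \<in> int_span S"
    using int_span_diff [OF j assms(2)] by simp
  then show "j = k"
    using indep by force
qed (fact assms(2))

lemma int_span_coeff_remainder:
  assumes "finite S" and indep: "\<And>k. int_scale k s \<in> int_span S \<Longrightarrow> k = 0"
    and "y \<in> int_span (insert s S)"
  shows "y - int_scale (int_span_coeff S s y) s \<in> int_span S"
proof -
  obtain x k where "x \<in> int_span S" "y = x + int_scale k s"
    using assms(3) int_span_insert [OF \<open>finite S\<close>] by blast
  then show ?thesis
    using int_span_coeff_eq [OF indep, where y = y and k = k] by simp
qed

lemma int_span_coeff_add:
  assumes "finite S" and indep: "\<And>k. int_scale k s \<in> int_span S \<Longrightarrow> k = 0"
    and "x \<in> int_span (insert s S)" "y \<in> int_span (insert s S)"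
  shows "int_span_coeff S s (x + y) = int_span_coeff S s x + int_span_coeff S s y"
proof (rule int_span_coeff_eq [OF indep])
  let ?c = "int_span_coeff S s"
  have "x + y - int_scale (?c x + ?c y) s = (x - int_scale (?c x) s) + (y - int_scale (?c y) s)"
    by (simp add: int_scale_add_left)
  also have "\<dots> \<in> int_span S"
    using assms by (intro int_span_add int_span_coeff_remainder)
  finally show "x + y - int_scale (?c x + ?c y) s \<in> int_span S" .
qed

lemma separated_by_int_homs_insert_independent:
  fixes S :: "'a::ab_group_add set"
  assumes "finite S" and indep: "\<And>k. int_scale k s \<in> int_span S \<Longrightarrow> k = 0"
    and sep: "separated_by_int_homs (int_span S)"
  shows "separated_by_int_homs (int_span (insert s S))"
proof (rule separated_by_int_homsI)
  fix T
  assume T: "finite T" "T \<subseteq> int_span (insert s S) - {0}"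
  let ?c = "int_span_coeff S s"
  define rest where "rest y = y - int_scale (?c y) s" for y
  have rest: "rest y \<in> int_span S" if "y \<in> int_span (insert s S)" for y
    unfolding rest_def using int_span_coeff_remainder [OF \<open>finite S\<close> indep that] .
  have "finite (rest ` T - {0})" "rest ` T - {0} \<subseteq> int_span S - {0}"
    using T rest by auto
  then obtain \<phi> :: "'a \<Rightarrow> int"
    where \<phi>: "additive_on (int_span S) \<phi>" "\<forall>t\<in>rest ` T - {0}. \<phi> t \<noteq> 0"
    using separated_by_int_homsD [OF sep] by blast
  obtain M where M: "\<And>t. t \<in> T \<Longrightarrow> \<bar>?c t\<bar> < M"
    using finite_abs_bound [OF T(1)] by blast
  define \<psi> where "\<psi> y = M * \<phi> (rest y) + ?c y" for y
  have "additive_on (int_span (insert s S)) \<psi>"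
    unfolding additive_on_def
  proof (intro ballI)
    fix x y
    assume x: "x \<in> int_span (insert s S)" and y: "y \<in> int_span (insert s S)"
    note c_add = int_span_coeff_add [OF \<open>finite S\<close> indep x y]
    have "rest (x + y) = rest x + rest y"
      by (simp add: rest_def c_add int_scale_add_left)
    then show "\<psi> (x + y) = \<psi> x + \<psi> y"
      using \<phi>(1) rest [OF x] rest [OF y]
      by (simp add: \<psi>_def c_add additive_on_def algebra_simps)
  qed
  moreover have "\<psi> t \<noteq> 0" if "t \<in> T" for t
  proof (cases "rest t = 0")
    case True
    then have "?c t \<noteq> 0"
      using that T(2) unfolding rest_def by auto
    then show ?thesis
      unfolding \<psi>_def True using additive_on_zero [OF \<phi>(1)] by simp
  next
    case False
    then have "\<phi> (rest t) \<noteq> 0"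
      using \<phi>(2) that by blast
    then show ?thesis
      unfolding \<psi>_def using int_mult_add_neq_0 M [OF that] by blast
  qed
  ultimately show "\<exists>\<psi>::'a \<Rightarrow> int. additive_on (int_span (insert s S)) \<psi> \<and> (\<forall>t\<in>T. \<psi> t \<noteq> 0)"
    by blast
qed

lemma separated_by_int_homs_int_span:
  fixes S :: "'b::ab_group_add set"
  assumes tf: "torsion_free TYPE('b)" and "finite S"
  shows "separated_by_int_homs (int_span S)"
  using \<open>finite S\<close>
proof (induction rule: finite_induct)
  case empty
  show ?case
    by (rule separated_by_int_homsI) (auto simp: additive_on_def)
next
  case (insert s S)
  show ?case
  proof (cases "\<exists>k. k \<noteq> 0 \<and> int_scale k s \<in> int_span S")
    case True
    then show ?thesis
      using separated_by_int_homs_insert_dependent [OF tf \<open>finite S\<close>] insert.IH by blast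
  next
    case False
    then show ?thesis
      using separated_by_int_homs_insert_independent [OF \<open>finite S\<close>] insert.IH by blast
  qed
qed

lemma inj_on_shear:
  fixes \<phi> :: "'b::ab_group_add \<Rightarrow> int" and g :: "'a::ab_group_add" and X :: "('a \<times> 'b) set"
  assumes add: "additive_on W \<phi>" and "snd ` X \<subseteq> W"
    and diff_mem: "\<And>x y. x \<in> X \<Longrightarrow> y \<in> X \<Longrightarrow> snd x - snd y \<in> W"
    and sep: "\<And>x y. x \<in> X \<Longrightarrow> y \<in> X \<Longrightarrow> snd x \<noteq> snd y \<Longrightarrow> \<phi> (snd x - snd y) \<noteq> 0"
    and N: "\<And>x y k. x \<in> X \<Longrightarrow> y \<in> X \<Longrightarrow> int_scale k g = fst x - fst y \<Longrightarrow> \<bar>k\<bar> < N"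
  shows "inj_on (\<lambda>p. fst p + int_scale (N * \<phi> (snd p)) g) X"
proof (rule inj_onI)
  fix x y
  assume x: "x \<in> X" and y: "y \<in> X"
    and eq: "fst x + int_scale (N * \<phi> (snd x)) g = fst y + int_scale (N * \<phi> (snd y)) g"
  define h where "h = snd x - snd y"
  have "\<phi> (snd x) = \<phi> h + \<phi> (snd y)"
    using add diff_mem [OF x y] \<open>snd ` X \<subseteq> W\<close> y unfolding additive_on_def h_def
    by (metis diff_add_cancel image_subset_iff)
  then have fst_diff: "int_scale (- (N * \<phi> h)) g = fst x - fst y"
    using eq by (simp add: distrib_left int_scale_add_left int_scale_minus_left algebra_simps)
  have "snd x = snd y"
  proof (rule ccontr)
    assume "snd x \<noteq> snd y"
    then have "N * \<phi> h + - (N * \<phi> h) \<noteq> 0"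
      using int_mult_add_neq_0 N [OF x y fst_diff] sep [OF x y] unfolding h_def by blast
    then show False
      by simp
  qed
  moreover have "\<phi> 0 = 0"
    using additive_on_zero add diff_mem [OF y y] by fastforce
  ultimately show "x = y"
    using fst_diff unfolding h_def by (simp add: prod_eq_iff)
qed

lemma exists_projection_inj_on:
  fixes g :: "'a::ab_group_add" and X :: "('a \<times> 'b::ab_group_add) set"
  assumes tf: "torsion_free TYPE('b)" and g: "\<And>k. int_scale k g = 0 \<Longrightarrow> k = 0"
    and "finite X"
  shows "\<exists>f. (\<forall>u. f (u, 0) = u) \<and> additive_on (UNIV \<times> int_span (snd ` X)) f \<and> inj_on f X"
proof -
  define S where "S = snd ` X"
  have "finite S"
    using \<open>finite X\<close> unfolding S_def by simp
  have XS: "snd ` X \<subseteq> int_span S"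
    using int_span_superset [OF \<open>finite S\<close>] unfolding S_def .
  define T where "T = (\<lambda>(x, y). snd x - snd y) ` (X \<times> X) - {0}"
  have "finite T"
    unfolding T_def using \<open>finite X\<close> by simp
  moreover have "T \<subseteq> int_span S - {0}"
    unfolding T_def using XS by (auto intro!: int_span_diff)
  ultimately obtain \<phi> :: "'b \<Rightarrow> int" where \<phi>: "additive_on (int_span S) \<phi>" "\<forall>t\<in>T. \<phi> t \<noteq> 0"
    using separated_by_int_homsD [OF separated_by_int_homs_int_span [OF tf \<open>finite S\<close>]] by blast
  define K where "K = (\<lambda>k. int_scale k g) -` ((\<lambda>(x, y). fst x - fst y) ` (X \<times> X))"
  have "finite K"
    unfolding K_def using \<open>finite X\<close> inj_int_scale [OF g] by (intro finite_vimageI) auto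
  then obtain N where N: "\<And>k. k \<in> K \<Longrightarrow> \<bar>k\<bar> < N"
    using finite_abs_bound [of K "\<lambda>k. k"] by blast
  define f where "f p = fst p + int_scale (N * \<phi> (snd p)) g" for p :: "'a \<times> 'b"
  have "f (u, 0) = u" for u
    unfolding f_def using additive_on_zero [OF \<phi>(1)] by simp
  moreover have "additive_on (UNIV \<times> int_span S) f"
    using \<phi>(1) unfolding additive_on_def f_def
    by (auto simp: distrib_left int_scale_add_left algebra_simps)
  moreover have "inj_on f X"
    unfolding f_def
  proof (rule inj_on_shear [OF \<phi>(1) XS])
    show "snd x - snd y \<in> int_span S" if "x \<in> X" "y \<in> X" for x y
      using that XS by (auto intro: int_span_diff)
    show "\<phi> (snd x - snd y) \<noteq> 0" if "x \<in> X" "y \<in> X" "snd x \<noteq> snd y" for x y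
      using that \<phi>(2) unfolding T_def by force
    show "\<bar>k\<bar> < N" if "x \<in> X" "y \<in> X" "int_scale k g = fst x - fst y" for x y k
      using that N unfolding K_def by force
  qed
  ultimately show ?thesis
    unfolding S_def by blast
qed

section \<open>Sumsets and their cardinalities\<close>

lemma sumset_image:
  assumes "\<And>a b. a \<in> A \<Longrightarrow> b \<in> B \<Longrightarrow> f (a + b) = f a + f b"
  shows "f ` sumset A B = sumset (f ` A) (f ` B)"
proof
  show "f ` sumset A B \<subseteq> sumset (f ` A) (f ` B)"
    using assms unfolding sumset_def by auto
  show "sumset (f ` A) (f ` B) \<subseteq> f ` sumset A B"
  proof
    fix z
    assume "z \<in> sumset (f ` A) (f ` B)"
    then obtain a b where "a \<in> A" "b \<in> B" "z = f a + f b"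
      unfolding sumset_def by blast
    with assms show "z \<in> f ` sumset A B"
      unfolding sumset_def by (auto intro!: image_eqI [of _ _ "a + b"])
  qed
qed

lemma finite_sumset [simp]:
  assumes "finite A" "finite B"
  shows "finite (sumset A B)"
proof -
  have "sumset A B = (\<lambda>(a, b). a + b) ` (A \<times> B)"
    unfolding sumset_def by auto
  then show ?thesis
    using assms by simp
qed

lemma sumset_empty_right [simp]: "sumset A {} = {}"
  unfolding sumset_def by simp

lemma sumset_mono: "A \<subseteq> A' \<Longrightarrow> B \<subseteq> B' \<Longrightarrow> sumset A B \<subseteq> sumset A' B'"
  unfolding sumset_def by blast

lemma card_le_card_sumset_left:
  assumes "finite A" "finite B" "B \<noteq> {}"
  shows "card A \<le> card (sumset A B)"
proof -
  obtain b where "b \<in> B"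
    using assms(3) by blast
  have "card A = card ((\<lambda>a. a + b) ` A)"
    by (simp add: card_image)
  also have "\<dots> \<le> card (sumset A B)"
    using assms \<open>b \<in> B\<close> by (intro card_mono finite_sumset) (auto simp: sumset_def)
  finally show ?thesis .
qed

lemma card_le_card_sumset_right:
  assumes "finite A" "finite B" "A \<noteq> {}"
  shows "card B \<le> card (sumset A B)"
proof -
  obtain a where "a \<in> A"
    using assms(3) by blast
  have "card B = card ((+) a ` B)"
    by (simp add: card_image)
  also have "\<dots> \<le> card (sumset A B)"
    using assms \<open>a \<in> A\<close> by (intro card_mono finite_sumset) (auto simp: sumset_def)
  finally show ?thesis .
qed

lemma one_le_divide_card:
  assumes "finite A" "A \<noteq> {}" "card A \<le> c"
  shows "1 \<le> real c / real (card A)"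
  using assms by (simp add: card_gt_0_iff le_divide_eq_1_pos)

lemma one_le_divide_sqrt_card_mult:
  assumes "finite A" "finite B" "A \<noteq> {}" "B \<noteq> {}" "card A \<le> c" "card B \<le> c"
  shows "1 \<le> real c / sqrt (real (card A) * real (card B))"
proof -
  have "real (card A) * real (card B) \<le> (real c)\<^sup>2"
    unfolding power2_eq_square using assms(5,6) by (intro mult_mono) auto
  then have "sqrt (real (card A) * real (card B)) \<le> real c"
    by (intro real_le_lsqrt) simp_all
  moreover have "0 < sqrt (real (card A) * real (card B))"
    using assms(1-4) by (simp add: card_gt_0_iff)
  ultimately show ?thesis
    by (simp add: le_divide_eq_1_pos)
qed

definition sumset_model :: "'a::ab_group_add set \<Rightarrow> 'b::ab_group_add set \<Rightarrow> bool" where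
  "sumset_model U V \<longleftrightarrow> (\<forall>A B. finite A \<and> finite B \<longrightarrow> (\<exists>f. f ` V = U
     \<and> card (f ` A) = card A \<and> card (f ` B) = card B
     \<and> card (sumset (f ` A) (f ` B)) = card (sumset A B)
     \<and> card (sumset (sumset (f ` A) (f ` B)) U) = card (sumset (sumset A B) V)))"

lemma sumset_model_if_local_homs:
  fixes U :: "'a::ab_group_add set" and V :: "'b::ab_group_add set"
  assumes "finite V"
    and homs: "\<And>X. finite X \<Longrightarrow> \<exists>f. additive_on X f \<and> inj_on f X \<and> f ` V = U"
  shows "sumset_model U V"
  unfolding sumset_model_def
proof (intro allI impI)
  fix A B :: "'b set"
  assume "finite A \<and> finite B"
  then have "finite (A \<union> B \<union> V \<union> sumset A B \<union> sumset (sumset A B) V)" (is "finite ?X")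
    using \<open>finite V\<close> by simp
  then obtain f :: "'b \<Rightarrow> 'a" where f: "additive_on ?X f" "inj_on f ?X" "f ` V = U"
    using homs by meson
  have image_AB: "f ` sumset A B = sumset (f ` A) (f ` B)"
    using f(1) unfolding additive_on_def by (intro sumset_image) blast
  have image_ABV: "f ` sumset (sumset A B) V = sumset (f ` sumset A B) (f ` V)"
    using f(1) unfolding additive_on_def by (intro sumset_image) blast
  have card_eq: "card (f ` Y) = card Y" if "Y \<subseteq> ?X" for Y
    using inj_on_subset [OF f(2) that] by (rule card_image)
  have "sumset (sumset (f ` A) (f ` B)) U = f ` sumset (sumset A B) V"
    unfolding image_AB image_ABV f(3) ..
  then show "\<exists>f. f ` V = U \<and> card (f ` A) = card A \<and> card (f ` B) = card B
     \<and> card (sumset (f ` A) (f ` B)) = card (sumset A B)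
     \<and> card (sumset (sumset (f ` A) (f ` B)) U) = card (sumset (sumset A B) V)"
    using f(3) card_eq by (intro exI [of _ f]) (auto simp flip: image_AB)
qed

lemma sumset_model_embedding:
  assumes "finite U"
  shows "sumset_model ((\<lambda>u. (u, 0::'b::ab_group_add)) ` U) U"
proof (rule sumset_model_if_local_homs)
  show "\<exists>f. additive_on X f \<and> inj_on f X \<and> f ` U = (\<lambda>u. (u, 0::'b)) ` U" for X
    by (intro exI [of _ "\<lambda>u. (u, 0)"]) (simp add: additive_on_def inj_on_def)
qed (fact assms)

lemma sumset_model_projection:
  fixes U :: "'a::ab_group_add set" and g :: 'a
  assumes tf: "torsion_free TYPE('b::ab_group_add)" and g: "\<And>k. int_scale k g = 0 \<Longrightarrow> k = 0"
    and "finite U"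
  shows "sumset_model U ((\<lambda>u. (u, 0::'b)) ` U)"
proof (rule sumset_model_if_local_homs)
  fix X :: "('a \<times> 'b) set"
  assume "finite X"
  then obtain f :: "'a \<times> 'b \<Rightarrow> 'a"
    where f: "\<forall>u. f (u, 0) = u" "additive_on (UNIV \<times> int_span (snd ` X)) f" "inj_on f X"
    using exists_projection_inj_on [OF tf g] by blast
  have "X \<subseteq> UNIV \<times> int_span (snd ` X)"
    using int_span_superset [of "snd ` X"] \<open>finite X\<close> by (auto simp: mem_Times_iff)
  with f(2) have "additive_on X f"
    by (rule additive_on_subset)
  moreover have "f ` (\<lambda>u. (u, 0)) ` U = U"
    using f(1) by (simp add: image_image)
  ultimately show "\<exists>f. additive_on X f \<and> inj_on f X \<and> f ` (\<lambda>u. (u, 0)) ` U = U"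
    using f(3) by blast
qed (use \<open>finite U\<close> in simp)

section \<open>The functionals\<close>

lemma alpha_le_if_sumset_model:
  fixes U :: "'a::ab_group_add set" and V :: "'b::ab_group_add set"
  assumes model: "sumset_model U V" and "finite V"
  shows "alpha U \<le> alpha V"
  unfolding alpha_def
proof (rule cInf_mono, goal_cases nonempty bounded witness)
  case nonempty
  show ?case
    using \<open>finite V\<close> by (auto intro!: exI [of _ "insert 0 V"])
next
  case bounded
  show ?case
    by (rule bdd_belowI [of _ 0]) auto
next
  case (witness x)
  then obtain A B where x: "x = real (card (sumset A B)) / sqrt (real (card A) * real (card B))"
    and AB: "finite A" "A \<noteq> {}" "finite B" "B \<noteq> {}" "V \<subseteq> A" "V \<subseteq> B"
    by blast
  then obtain f :: "'b \<Rightarrow> 'a" where f: "f ` V = U" "card (f ` A) = card A" "card (f ` B) = card B"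
    "card (sumset (f ` A) (f ` B)) = card (sumset A B)"
    using model unfolding sumset_model_def by meson
  have "x = real (card (sumset (f ` A) (f ` B))) / sqrt (real (card (f ` A)) * real (card (f ` B)))"
    using x f by simp
  moreover have "finite (f ` A)" "f ` A \<noteq> {}" "finite (f ` B)" "f ` B \<noteq> {}" "U \<subseteq> f ` A" "U \<subseteq> f ` B"
    using AB f(1) by auto
  ultimately show ?case
    by blast
qed

lemma alpha_ge_one:
  assumes "finite U"
  shows "1 \<le> alpha U"
  unfolding alpha_def
proof (rule cInf_greatest, goal_cases nonempty bound)
  case nonempty
  show ?case
    using assms by (auto intro!: exI [of _ "insert 0 U"])
next
  case (bound x)
  then show ?case
    by (auto intro!: one_le_divide_sqrt_card_mult card_le_card_sumset_left card_le_card_sumset_right)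
qed

lemma alpha_le_one:
  assumes "finite F" "F \<noteq> {}" "sumset F F = F" "U \<subseteq> F"
  shows "alpha U \<le> 1"
proof -
  have "alpha U \<le> real (card (sumset F F)) / sqrt (real (card F) * real (card F))"
    unfolding alpha_def using assms by (intro cInf_lower bdd_belowI [of _ 0] CollectI exI conjI refl) auto
  also have "\<dots> = 1"
    using assms by (simp add: card_gt_0_iff)
  finally show ?thesis .
qed

lemma alpha'_le_if_sumset_model:
  fixes U :: "'a::ab_group_add set" and V :: "'b::ab_group_add set"
  assumes model: "sumset_model U V" and "finite V"
  shows "alpha' U \<le> alpha' V"
  unfolding alpha'_def
proof (rule cInf_mono, goal_cases nonempty bounded witness)
  case nonempty
  show ?case
    using \<open>finite V\<close> by (auto intro!: exI [of _ "insert 0 V"])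
next
  case bounded
  show ?case
    by (rule bdd_belowI [of _ 0]) auto
next
  case (witness x)
  then obtain A B where x: "x = real (card (sumset A B)) / real (card A)"
    and AB: "finite A" "A \<noteq> {}" "finite B" "B \<noteq> {}" "V \<subseteq> A" "V \<subseteq> B" "card A = card B"
    by blast
  then obtain f :: "'b \<Rightarrow> 'a" where f: "f ` V = U" "card (f ` A) = card A" "card (f ` B) = card B"
    "card (sumset (f ` A) (f ` B)) = card (sumset A B)"
    using model unfolding sumset_model_def by meson
  have "x = real (card (sumset (f ` A) (f ` B))) / real (card (f ` A))"
    using x f by simp
  moreover have "finite (f ` A)" "f ` A \<noteq> {}" "finite (f ` B)" "f ` B \<noteq> {}" "U \<subseteq> f ` A" "U \<subseteq> f ` B"
    "card (f ` A) = card (f ` B)"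
    using AB f by auto
  ultimately show ?case
    by blast
qed

lemma alpha'_ge_one:
  assumes "finite U"
  shows "1 \<le> alpha' U"
  unfolding alpha'_def
proof (rule cInf_greatest, goal_cases nonempty bound)
  case nonempty
  show ?case
    using assms by (auto intro!: exI [of _ "insert 0 U"])
next
  case (bound x)
  then show ?case
    by (auto intro!: one_le_divide_card card_le_card_sumset_left)
qed

lemma alpha'_le_one:
  assumes "finite F" "F \<noteq> {}" "sumset F F = F" "U \<subseteq> F"
  shows "alpha' U \<le> 1"
proof -
  have "alpha' U \<le> real (card (sumset F F)) / real (card F)"
    unfolding alpha'_def using assms by (intro cInf_lower bdd_belowI [of _ 0] CollectI exI conjI refl) auto
  also have "\<dots> = 1"
    using assms by (simp add: card_gt_0_iff)
  finally show ?thesis .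
qed

lemma alpha''_le_if_sumset_model:
  fixes U :: "'a::ab_group_add set" and V :: "'b::ab_group_add set"
  assumes model: "sumset_model U V" and "finite V"
  shows "alpha'' U \<le> alpha'' V"
  unfolding alpha''_def
proof (rule cInf_mono, goal_cases nonempty bounded witness)
  case nonempty
  show ?case
    using \<open>finite V\<close> by (auto intro!: exI [of _ "insert 0 V"])
next
  case bounded
  show ?case
    by (rule bdd_belowI [of _ 0]) auto
next
  case (witness x)
  then obtain A where x: "x = real (card (sumset A A)) / real (card A)"
    and A: "finite A" "A \<noteq> {}" "V \<subseteq> A"
    by blast
  then obtain f :: "'b \<Rightarrow> 'a" where f: "f ` V = U" "card (f ` A) = card A"
    "card (sumset (f ` A) (f ` A)) = card (sumset A A)"
    using model unfolding sumset_model_def by meson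
  have "x = real (card (sumset (f ` A) (f ` A))) / real (card (f ` A))"
    using x f by simp
  moreover have "finite (f ` A)" "f ` A \<noteq> {}" "U \<subseteq> f ` A"
    using A f(1) by auto
  ultimately show ?case
    by blast
qed

lemma alpha''_ge_one:
  assumes "finite U"
  shows "1 \<le> alpha'' U"
  unfolding alpha''_def
proof (rule cInf_greatest, goal_cases nonempty bound)
  case nonempty
  show ?case
    using assms by (auto intro!: exI [of _ "insert 0 U"])
next
  case (bound x)
  then show ?case
    by (auto intro!: one_le_divide_card card_le_card_sumset_left)
qed

lemma alpha''_le_one:
  assumes "finite F" "F \<noteq> {}" "sumset F F = F" "U \<subseteq> F"
  shows "alpha'' U \<le> 1"
proof -
  have "alpha'' U \<le> real (card (sumset F F)) / real (card F)"
    unfolding alpha''_def using assms by (intro cInf_lower bdd_belowI [of _ 0] CollectI exI conjI refl) auto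
  also have "\<dots> = 1"
    using assms by (simp add: card_gt_0_iff)
  finally show ?thesis .
qed

lemma beta'_le_if_sumset_model:
  fixes U :: "'a::ab_group_add set" and V :: "'b::ab_group_add set"
  assumes model: "sumset_model U V"
  shows "beta' U \<le> beta' V"
  unfolding beta'_def
proof (rule cInf_mono, goal_cases nonempty bounded witness)
  case nonempty
  show ?case
    by (auto intro!: exI [of _ "{0}"])
next
  case bounded
  show ?case
    by (rule bdd_belowI [of _ 0]) auto
next
  case (witness x)
  then obtain A B where x: "x = real (card (sumset (sumset A B) V)) / sqrt (real (card A) * real (card B))"
    and AB: "finite A" "A \<noteq> {}" "finite B" "B \<noteq> {}" "card A = card B"
    by blast
  then obtain f :: "'b \<Rightarrow> 'a" where f: "card (f ` A) = card A" "card (f ` B) = card B"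
    "card (sumset (sumset (f ` A) (f ` B)) U) = card (sumset (sumset A B) V)"
    using model unfolding sumset_model_def by meson
  have "x = real (card (sumset (sumset (f ` A) (f ` B)) U)) / sqrt (real (card (f ` A)) * real (card (f ` B)))"
    using x f by simp
  moreover have "finite (f ` A)" "f ` A \<noteq> {}" "finite (f ` B)" "f ` B \<noteq> {}" "card (f ` A) = card (f ` B)"
    using AB f by auto
  ultimately show ?case
    by blast
qed

lemma beta'_ge_one:
  assumes "finite U" "U \<noteq> {}"
  shows "1 \<le> beta' U"
  unfolding beta'_def
proof (rule cInf_greatest, goal_cases nonempty bound)
  case nonempty
  show ?case
    by (auto intro!: exI [of _ "{0}"])
next
  case (bound x)
  then obtain A B where x: "x = real (card (sumset (sumset A B) U)) / sqrt (real (card A) * real (card B))"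
    and AB: "finite A" "A \<noteq> {}" "finite B" "B \<noteq> {}"
    by blast
  have "card (sumset A B) \<le> card (sumset (sumset A B) U)"
    using AB assms by (intro card_le_card_sumset_left) simp_all
  moreover have "card A \<le> card (sumset A B)" "card B \<le> card (sumset A B)"
    using AB by (simp_all add: card_le_card_sumset_left card_le_card_sumset_right)
  ultimately show ?case
    unfolding x using AB by (intro one_le_divide_sqrt_card_mult) simp_all
qed

lemma beta'_le_one:
  assumes "finite F" "F \<noteq> {}" "sumset F F = F" "U \<subseteq> F"
  shows "beta' U \<le> 1"
proof -
  have "beta' U \<le> real (card (sumset (sumset F F) U)) / sqrt (real (card F) * real (card F))"
    unfolding beta'_def using assms by (intro cInf_lower bdd_belowI [of _ 0] CollectI exI conjI refl) auto
  also have "\<dots> = real (card (sumset F U)) / real (card F)"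
    using assms(3) by simp
  also have "\<dots> \<le> 1"
    using assms sumset_mono [of F F U F] by (simp add: card_gt_0_iff card_mono)
  finally show ?thesis .
qed

lemma beta'_empty [simp]: "beta' {} = 0"
proof -
  have "{real (card (sumset (sumset A B) {})) / sqrt (real (card A) * real (card B)) | A B :: 'a set.
      finite A \<and> A \<noteq> {} \<and> finite B \<and> B \<noteq> {} \<and> card A = card B} = {0}"
    by (auto intro!: exI [of _ "{0}"])
  then show ?thesis
    unfolding beta'_def by simp
qed

lemma beta''_le_if_sumset_model:
  fixes U :: "'a::ab_group_add set" and V :: "'b::ab_group_add set"
  assumes model: "sumset_model U V"
  shows "beta'' U \<le> beta'' V"
  unfolding beta''_def
proof (rule cInf_mono, goal_cases nonempty bounded witness)
  case nonempty
  show ?case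
    by (auto intro!: exI [of _ "{0}"])
next
  case bounded
  show ?case
    by (rule bdd_belowI [of _ 0]) auto
next
  case (witness x)
  then obtain A where x: "x = real (card (sumset (sumset A A) V)) / real (card A)"
    and A: "finite A" "A \<noteq> {}"
    by blast
  then obtain f :: "'b \<Rightarrow> 'a" where f: "card (f ` A) = card A"
    "card (sumset (sumset (f ` A) (f ` A)) U) = card (sumset (sumset A A) V)"
    using model unfolding sumset_model_def by meson
  have "x = real (card (sumset (sumset (f ` A) (f ` A)) U)) / real (card (f ` A))"
    using x f by simp
  moreover have "finite (f ` A)" "f ` A \<noteq> {}"
    using A by auto
  ultimately show ?case
    by blast
qed

lemma beta''_ge_one:
  assumes "finite U" "U \<noteq> {}"
  shows "1 \<le> beta'' U"
  unfolding beta''_def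
proof (rule cInf_greatest, goal_cases nonempty bound)
  case nonempty
  show ?case
    by (auto intro!: exI [of _ "{0}"])
next
  case (bound x)
  then obtain A where x: "x = real (card (sumset (sumset A A) U)) / real (card A)"
    and A: "finite A" "A \<noteq> {}"
    by blast
  have "card A \<le> card (sumset A A)"
    using A by (simp add: card_le_card_sumset_left)
  also have "\<dots> \<le> card (sumset (sumset A A) U)"
    using A assms by (intro card_le_card_sumset_left) simp_all
  finally show ?case
    unfolding x using A by (intro one_le_divide_card)
qed

lemma beta''_le_one:
  assumes "finite F" "F \<noteq> {}" "sumset F F = F" "U \<subseteq> F"
  shows "beta'' U \<le> 1"
proof -
  have "beta'' U \<le> real (card (sumset (sumset F F) U)) / real (card F)"
    unfolding beta''_def using assms by (intro cInf_lower bdd_belowI [of _ 0] CollectI exI conjI refl) auto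
  also have "\<dots> \<le> 1"
    using assms sumset_mono [of F F U F] by (simp add: card_gt_0_iff card_mono)
  finally show ?thesis .
qed

lemma beta''_empty [simp]: "beta'' {} = 0"
proof -
  have "{real (card (sumset (sumset A A) {})) / real (card A) | A :: 'a set. finite A \<and> A \<noteq> {}} = {0}"
    by (auto intro!: exI [of _ "{0}"])
  then show ?thesis
    unfolding beta''_def by simp
qed

lemma functionals_le_if_sumset_model:
  fixes U :: "'a::ab_group_add set" and V :: "'b::ab_group_add set"
  assumes "sumset_model U V" "finite V"
  shows "alpha U \<le> alpha V \<and> alpha' U \<le> alpha' V \<and> alpha'' U \<le> alpha'' V
    \<and> beta' U \<le> beta' V \<and> beta'' U \<le> beta'' V"
  using assms by (simp add: alpha_le_if_sumset_model alpha'_le_if_sumset_model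
      alpha''_le_if_sumset_model beta'_le_if_sumset_model beta''_le_if_sumset_model)

lemma functionals_le_if_sumset_idem:
  fixes U :: "'a::ab_group_add set" and V :: "'b::ab_group_add set"
  assumes F: "finite F" "F \<noteq> {}" "sumset F F = F" "U \<subseteq> F"
    and "finite V" and empty_iff: "V = {} \<longleftrightarrow> U = {}"
  shows "alpha U \<le> alpha V \<and> alpha' U \<le> alpha' V \<and> alpha'' U \<le> alpha'' V
    \<and> beta' U \<le> beta' V \<and> beta'' U \<le> beta'' V"
proof -
  have "alpha U \<le> alpha V" "alpha' U \<le> alpha' V" "alpha'' U \<le> alpha'' V"
    using alpha_le_one [OF F] alpha'_le_one [OF F] alpha''_le_one [OF F]
      alpha_ge_one [of V] alpha'_ge_one [of V] alpha''_ge_one [of V] \<open>finite V\<close>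
    by linarith+
  moreover have "beta' U \<le> beta' V \<and> beta'' U \<le> beta'' V"
  proof (cases "U = {}")
    case True
    then show ?thesis
      using empty_iff by simp
  next
    case False
    then show ?thesis
      using beta'_le_one [OF F] beta''_le_one [OF F] beta'_ge_one [of V] beta''_ge_one [of V]
        \<open>finite V\<close> empty_iff
      by linarith
  qed
  ultimately show ?thesis
    by blast
qed

lemma functionals_le_if_torsion:
  fixes U :: "'a::ab_group_add set" and V :: "'b::ab_group_add set"
  assumes "\<And>u::'a. \<exists>n>0. int_scale n u = 0"
    and "finite U" "finite V" "V = {} \<longleftrightarrow> U = {}"
  shows "alpha U \<le> alpha V \<and> alpha' U \<le> alpha' V \<and> alpha'' U \<le> alpha'' V
    \<and> beta' U \<le> beta' V \<and> beta'' U \<le> beta'' V"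
proof (rule functionals_le_if_sumset_idem)
  show "finite (int_span U)"
    using assms(1,2) by (intro finite_int_span_if_torsion)
  show "int_span U \<noteq> {}"
    using zero_mem_int_span by blast
  show "U \<subseteq> int_span U"
    using \<open>finite U\<close> by (rule int_span_superset)
qed (simp_all add: sumset_int_span assms(3,4))

theorem mainTheorem17:
  fixes U :: "'a::ab_group_add set"
  assumes "torsion_free TYPE('b::ab_group_add)"
    and "finite U"
  defines "V \<equiv> (\<lambda>u. (u, 0::'b)) ` U"
  shows "alpha V = alpha U \<and> alpha' V = alpha' U \<and> alpha'' V = alpha'' U
         \<and> beta' V = beta' U \<and> beta'' V = beta'' U"
proof -
  have "finite V" "V = {} \<longleftrightarrow> U = {}"
    using \<open>finite U\<close> unfolding V_def by auto
  have "sumset_model V U"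
    unfolding V_def using \<open>finite U\<close> by (rule sumset_model_embedding)
  with \<open>finite U\<close> have "alpha V \<le> alpha U \<and> alpha' V \<le> alpha' U \<and> alpha'' V \<le> alpha'' U
      \<and> beta' V \<le> beta' U \<and> beta'' V \<le> beta'' U"
    by (intro functionals_le_if_sumset_model)
  moreover have "alpha U \<le> alpha V \<and> alpha' U \<le> alpha' V \<and> alpha'' U \<le> alpha'' V
      \<and> beta' U \<le> beta' V \<and> beta'' U \<le> beta'' V"
  proof (cases "\<exists>g::'a. \<forall>k. int_scale k g = 0 \<longrightarrow> k = 0")
    case True
    then obtain g :: 'a where "\<And>k. int_scale k g = 0 \<Longrightarrow> k = 0"
      by blast
    with assms(1,2) have "sumset_model U V"
      unfolding V_def by (intro sumset_model_projection)
    with \<open>finite V\<close> show ?thesis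
      by (intro functionals_le_if_sumset_model)
  next
    case False
    then have "\<exists>n>0. int_scale n u = 0" for u :: 'a
      by (meson int_scale_abs_eq_0 zero_less_abs_iff)
    with \<open>finite U\<close> \<open>finite V\<close> \<open>V = {} \<longleftrightarrow> U = {}\<close> show ?thesis
      by (intro functionals_le_if_torsion)
  qed
  ultimately show ?thesis
    by (meson antisym)
qed

end
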